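(* Let $m,n\geq 0$ be integers. Then \[ \sum_{k=1}^{n}\frac{(-1)^k q^{mk+\binom{k+1}{2}}}{(q;q)_k (q;q)_{n-k}(q^k;q)_{m+1}} -\sum_{k=1}^{m}\frac{(-1)^k q^{nk+\binom{k+1}{2}}}{(q;q)_k (q;q)_{m-k}(q^k;q)_{n+1}} =\frac{1}{(q;q)_{m}(q;q)_{n}}\left(\sum_{k=1}^m\frac{q^k}{1-q^k}-\sum_{k=1}^n\frac{q^k}{1-q^k}\right). \]
   Context: For $N\geq 0$, $(x;q)_N=(1-x)(1-xq)\cdots(1-xq^{N-1})$ (with $(x;q)_0=1$). The identity is one of rational functions in $q$. *)

theory Defs
  imports Main
begin

definition qpoch :: "'a::comm_ring_1 \<Rightarrow> 'a \<Rightarrow> nat \<Rightarrow> 'a" where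
  "qpoch x q N = (\<Prod>i<N. (1 - x * q ^ i))"

end

theory Submission
  imports Defs
begin

text \<open>
  Since (q;q)_k (q^k;q)_{m+1} = (q;q)_{k+m} (1 - q^k), the difference
  (q;q)_{n+1} F(m,n+1) - (q;q)_n F(m,n) of the first sum F(m,n) of the identity simplifies
  termwise to -q^{m+n+1} (q;q)_n times a terminating q-Chu-Vandermonde sum. That sum equals
  1 / ((q;q)_m (q;q)_n (1 - q^{m+n+1})) by a recurrence which lowers n and raises m.
  Telescoping gives (q;q)_m (q;q)_n F(m,n) = H_m - H_{m+n} with H_j = sum_{k=1..j} q^k / (1 - q^k),
  and the identity is F(m,n) - F(n,m).
\<close>

lemma qpoch_0 [simp]: "qpoch x q 0 = 1"
  by (simp add: qpoch_def)

lemma qpoch_Suc: "qpoch x q (Suc N) = qpoch x q N * (1 - x * q ^ N)"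
  by (simp add: qpoch_def)

lemma qpoch_add: "qpoch x q (k + m) = qpoch x q k * qpoch (x * q ^ k) q m"
  by (induction m) (simp_all add: qpoch_Suc power_add mult.assoc)

lemma qpoch_Suc_left: "qpoch x q (Suc m) = (1 - x) * qpoch (x * q) q m"
  using qpoch_add[of x q 1 m] by (simp add: qpoch_Suc)

lemma qpoch_times_qpoch_power:
  "qpoch q q k * qpoch (q ^ k) q (Suc m) = qpoch q q (k + m) * (1 - q ^ k)"
  by (simp add: qpoch_add qpoch_Suc_left mult_ac)

definition qcoeff :: "'a::comm_ring_1 \<Rightarrow> nat \<Rightarrow> nat \<Rightarrow> 'a" where
  "qcoeff q m k = (-1) ^ k * q ^ (m * k + ((k + 1) choose 2))"

lemma qcoeff_0 [simp]: "qcoeff q m 0 = 1"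
  by (simp add: qcoeff_def numeral_2_eq_2)

lemma qcoeff_Suc: "qcoeff q m (Suc k) = - (q ^ (m + k + 1) * qcoeff q m k)"
proof -
  have "Suc (Suc k) choose 2 = (Suc k choose 2) + Suc k"
    by (simp add: numeral_2_eq_2)
  then show ?thesis
    by (simp add: qcoeff_def power_add algebra_simps)
qed

lemma qcoeff_Suc_left: "qcoeff q (Suc m) k = q ^ k * qcoeff q m k"
  by (simp add: qcoeff_def power_add algebra_simps)

definition q_harmonic :: "'a::field \<Rightarrow> nat \<Rightarrow> 'a" where
  "q_harmonic q n = (\<Sum>k=1..n. q ^ k / (1 - q ^ k))"

text \<open>Up to normalisation, chu_sum q m n is the basic hypergeometric series
  2phi1(q^{-n}, q; q^{m+2}; q, q^{m+n+1}).\<close>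

definition chu_sum :: "'a::field \<Rightarrow> nat \<Rightarrow> nat \<Rightarrow> 'a" where
  "chu_sum q m n = (\<Sum>k\<le>n. qcoeff q m k / (qpoch q q (n - k) * qpoch q q (m + k + 1)))"

definition alt_sum :: "'a::field \<Rightarrow> nat \<Rightarrow> nat \<Rightarrow> 'a" where
  "alt_sum q m n =
     (\<Sum>k=1..n. qcoeff q m k / (qpoch q q k * qpoch q q (n - k) * qpoch (q ^ k) q (m + 1)))"

lemma alt_sum_normalized:
  "qpoch q q n * alt_sum q m n = (\<Sum>k=1..n.
     qcoeff q m k * (qpoch q q n / qpoch q q (n - k)) / (qpoch q q (k + m) * (1 - q ^ k)))"
  unfolding alt_sum_def sum_distrib_left
proof (rule sum.cong)
  fix k
  have "qpoch q q k * qpoch q q (n - k) * qpoch (q ^ k) q (m + 1)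
      = qpoch q q (n - k) * (qpoch q q k * qpoch (q ^ k) q (Suc m))"
    by (simp add: ac_simps)
  also have "\<dots> = qpoch q q (n - k) * (qpoch q q (k + m) * (1 - q ^ k))"
    by (simp only: qpoch_times_qpoch_power)
  finally have denominator: "qpoch q q k * qpoch q q (n - k) * qpoch (q ^ k) q (m + 1)
      = qpoch q q (n - k) * (qpoch q q (k + m) * (1 - q ^ k))" .
  show "qpoch q q n * (qcoeff q m k / (qpoch q q k * qpoch q q (n - k) * qpoch (q ^ k) q (m + 1)))
      = qcoeff q m k * (qpoch q q n / qpoch q q (n - k)) / (qpoch q q (k + m) * (1 - q ^ k))"
    unfolding denominator by (simp add: ac_simps)
qed simp

locale non_root_of_unity =
  fixes q :: "'a::field"
  assumes power_ne_one: "0 < j \<Longrightarrow> q ^ j \<noteq> 1"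
begin

lemma power_eq_one_iff [simp]: "q ^ j = 1 \<longleftrightarrow> j = 0"
  using power_ne_one by fastforce

lemma one_minus_power_ne_0: "0 < j \<Longrightarrow> 1 - q ^ j \<noteq> 0"
  by simp

lemma mult_power_ne_one [simp]: "q * q ^ j \<noteq> 1"
  using power_eq_one_iff[of "Suc j"] by simp

lemma qpoch_ne_0 [simp]: "qpoch q q N \<noteq> 0"
  by (induction N) (simp_all add: qpoch_Suc)

lemma chu_terms_combine:
  "q ^ k * qcoeff q m k / (qpoch q q d * qpoch q q (m + k + 1))
     + (1 - q ^ Suc k) * qcoeff q m (Suc k) / (qpoch q q d * qpoch q q (m + k + 2))
   = (1 - q ^ Suc m) * (qcoeff q (Suc m) k / (qpoch q q d * qpoch q q (Suc m + k + 1)))"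
proof -
  define r where "r = q ^ (m + k + 2)"
  have r: "1 - r \<noteq> 0" "qpoch q q (m + k + 2) = qpoch q q (m + k + 1) * (1 - r)"
    unfolding r_def by (rule one_minus_power_ne_0, simp) (simp add: qpoch_Suc)
  have bracket: "q ^ k * (1 - r) - q ^ (m + k + 1) * (1 - q ^ Suc k) = (1 - q ^ Suc m) * q ^ k"
    unfolding r_def by (simp add: power_add algebra_simps)
  have "q ^ k * qcoeff q m k / (qpoch q q d * qpoch q q (m + k + 1))
      + (1 - q ^ Suc k) * qcoeff q m (Suc k) / (qpoch q q d * qpoch q q (m + k + 2))
    = qcoeff q m k / (qpoch q q d * qpoch q q (m + k + 2))
      * (q ^ k * (1 - r) - q ^ (m + k + 1) * (1 - q ^ Suc k))"
    using r(1) unfolding r(2) qcoeff_Suc by (simp add: field_simps)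
  also have "\<dots> = (1 - q ^ Suc m) * (qcoeff q (Suc m) k / (qpoch q q d * qpoch q q (Suc m + k + 1)))"
    unfolding bracket by (simp add: qcoeff_Suc_left)
  finally show ?thesis .
qed

lemma chu_sum_Suc:
  "(1 - q ^ Suc n) * chu_sum q m (Suc n) = (1 - q ^ Suc m) * chu_sum q (Suc m) n"
proof -
  define a where "a k = qcoeff q m k / (qpoch q q (Suc n - k) * qpoch q q (m + k + 1))" for k
  \<comment> \<open>split \<open>1 - q^(n+1) = q^k (1 - q^(n+1-k)) + (1 - q^k)\<close> and shift the index of the second part\<close>
  define X where "X k = q ^ k * (1 - q ^ (Suc n - k)) * a k" for k
  define Y where "Y k = (1 - q ^ k) * a k" for k
  have X_eq: "X k = q ^ k * qcoeff q m k / (qpoch q q (n - k) * qpoch q q (m + k + 1))"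
    if "k \<le> n" for k
  proof -
    have "Suc n - k = Suc (n - k)" using that by simp
    then show ?thesis by (simp add: X_def a_def qpoch_Suc)
  qed
  have Y_eq: "Y (Suc k) = (1 - q ^ Suc k) * qcoeff q m (Suc k)
      / (qpoch q q (n - k) * qpoch q q (m + k + 2))" for k
    by (simp add: Y_def a_def)
  have XY: "X k + Y (Suc k) = (1 - q ^ Suc m) * (qcoeff q (Suc m) k
      / (qpoch q q (n - k) * qpoch q q (Suc m + k + 1)))" if "k \<le> n" for k
    unfolding X_eq[OF that] Y_eq by (rule chu_terms_combine)
  have "(1 - q ^ Suc n) * chu_sum q m (Suc n) = (\<Sum>k\<le>Suc n. X k + Y k)"
    unfolding chu_sum_def sum_distrib_left
  proof (rule sum.cong)
    fix k assume "k \<in> {..Suc n}"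
    then have "q ^ k * q ^ (Suc n - k) = q ^ Suc n"
      by (simp flip: power_add)
    then have "1 - q ^ Suc n = q ^ k * (1 - q ^ (Suc n - k)) + (1 - q ^ k)"
      by (simp add: algebra_simps)
    then show "(1 - q ^ Suc n) * (qcoeff q m k / (qpoch q q (Suc n - k) * qpoch q q (m + k + 1)))
        = X k + Y k"
      unfolding X_def Y_def a_def by (simp only: distrib_right)
  qed simp
  also have "\<dots> = (\<Sum>k\<le>n. X k) + (\<Sum>k\<le>n. Y (Suc k))"
  proof -
    have "(\<Sum>k\<le>Suc n. X k) = (\<Sum>k\<le>n. X k)"
      by (simp add: X_def)
    moreover have "(\<Sum>k\<le>Suc n. Y k) = (\<Sum>k\<le>n. Y (Suc k))"
      by (simp only: sum.atMost_Suc_shift) (simp add: Y_def)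
    ultimately show ?thesis
      by (simp only: sum.distrib)
  qed
  also have "\<dots> = (\<Sum>k\<le>n. X k + Y (Suc k))"
    by (simp only: sum.distrib)
  also have "\<dots> = (1 - q ^ Suc m) * chu_sum q (Suc m) n"
    unfolding chu_sum_def sum_distrib_left by (rule sum.cong) (simp_all add: XY)
  finally show ?thesis .
qed

lemma chu_sum_eq: "chu_sum q m n = 1 / (qpoch q q m * qpoch q q n * (1 - q ^ (m + n + 1)))"
proof (induction n arbitrary: m)
  case 0
  then show ?case
    by (simp add: chu_sum_def qpoch_Suc)
next
  case (Suc n)
  define u where "u = q ^ (m + Suc n + 1)"
  have u: "1 - u \<noteq> 0"
    unfolding u_def by (rule one_minus_power_ne_0) simp
  have IH: "chu_sum q (Suc m) n = 1 / (qpoch q q (Suc m) * qpoch q q n * (1 - u))"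
    using Suc.IH[of "Suc m"] by (simp add: u_def)
  have "chu_sum q m (Suc n) = (1 - q ^ Suc m) * chu_sum q (Suc m) n / (1 - q ^ Suc n)"
    using chu_sum_Suc[of n m] by (simp add: field_simps)
  also have "\<dots> = 1 / (qpoch q q m * qpoch q q (Suc n) * (1 - u))"
    using u unfolding IH by (simp add: qpoch_Suc)
  finally show ?case
    unfolding u_def .
qed

lemma qpoch_quotient_diff:
  assumes "k \<le> n"
  shows "qpoch q q (Suc n) / qpoch q q (Suc n - k) - qpoch q q n / qpoch q q (n - k)
    = q ^ (Suc n - k) * (1 - q ^ k) * (qpoch q q n / qpoch q q (Suc n - k))"
proof -
  define d where "d = n - k"
  define v where "v = q ^ Suc d"
  have n: "Suc n - k = Suc d" "n - k = d"
    using assms by (simp_all add: d_def)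
  have v: "1 - v \<noteq> 0"
    unfolding v_def by (rule one_minus_power_ne_0) simp
  have "qpoch q q (Suc n) = qpoch q q n * (1 - q ^ k * v)"
    using assms by (simp add: qpoch_Suc v_def d_def flip: power_add power_Suc)
  then have "qpoch q q (Suc n) / qpoch q q (Suc d) - qpoch q q n / qpoch q q d
      = qpoch q q n * (1 - q ^ k * v) / (qpoch q q d * (1 - v)) - qpoch q q n / qpoch q q d"
    by (simp add: qpoch_Suc v_def)
  also have "\<dots> = v * (1 - q ^ k) * (qpoch q q n / (qpoch q q d * (1 - v)))"
    using v by (simp add: field_simps)
  finally show ?thesis
    unfolding n by (simp add: qpoch_Suc v_def)
qed

lemma alt_sum_Suc:
  "qpoch q q (Suc n) * alt_sum q m (Suc n) - qpoch q q n * alt_sum q m n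
    = - (q ^ (m + n + 1) * qpoch q q n * chu_sum q m n)"
proof -
  define T where "T N k = qcoeff q m k * (qpoch q q N / qpoch q q (N - k))
    / (qpoch q q (k + m) * (1 - q ^ k))" for N k
  define U where "U k = qcoeff q m k * q ^ (Suc n - k) * (qpoch q q n / qpoch q q (Suc n - k))
    / qpoch q q (k + m)" for k
  have T_diff: "T (Suc n) k - T n k = U k" if "1 \<le> k" "k \<le> n" for k
  proof -
    have "1 - q ^ k \<noteq> 0"
      using that by (intro one_minus_power_ne_0) simp
    have "T (Suc n) k - T n k = qcoeff q m k
        * (qpoch q q (Suc n) / qpoch q q (Suc n - k) - qpoch q q n / qpoch q q (n - k))
        / (qpoch q q (k + m) * (1 - q ^ k))"
      by (simp only: T_def diff_divide_distrib right_diff_distrib)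
    also have "\<dots> = qcoeff q m k * (q ^ (Suc n - k) * (1 - q ^ k)
        * (qpoch q q n / qpoch q q (Suc n - k))) / (qpoch q q (k + m) * (1 - q ^ k))"
      by (simp only: qpoch_quotient_diff[OF that(2)])
    also have "\<dots> = U k"
      using \<open>1 - q ^ k \<noteq> 0\<close> by (simp add: U_def)
    finally show ?thesis .
  qed
  have T_last: "T (Suc n) (Suc n) = U (Suc n)"
    by (simp add: T_def U_def qpoch_Suc)
  have U_Suc: "U (Suc j) = - (q ^ (m + n + 1) * qpoch q q n
      * (qcoeff q m j / (qpoch q q (n - j) * qpoch q q (m + j + 1))))" if "j \<le> n" for j
  proof -
    have "U (Suc j) = - (q ^ (m + j + 1) * q ^ (n - j) * qpoch q q n
        * (qcoeff q m j / (qpoch q q (n - j) * qpoch q q (m + j + 1))))"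
      by (simp add: U_def qcoeff_Suc ac_simps)
    also have "q ^ (m + j + 1) * q ^ (n - j) = q ^ (m + n + 1)"
      using that by (simp flip: power_add)
    finally show ?thesis .
  qed
  have "qpoch q q (Suc n) * alt_sum q m (Suc n) - qpoch q q n * alt_sum q m n
      = (\<Sum>k=1..Suc n. T (Suc n) k) - (\<Sum>k=1..n. T n k)"
    by (simp only: alt_sum_normalized T_def)
  also have "\<dots> = (\<Sum>k=1..n. T (Suc n) k - T n k) + T (Suc n) (Suc n)"
    by (simp add: sum_subtractf)
  also have "\<dots> = (\<Sum>k=1..Suc n. U k)"
    by (simp add: T_diff T_last)
  also have "\<dots> = (\<Sum>j\<le>n. U (Suc j))"
    by (simp only: One_nat_def sum.shift_bounds_cl_Suc_ivl atLeast0AtMost)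
  also have "\<dots> = - (q ^ (m + n + 1) * qpoch q q n * chu_sum q m n)"
    by (simp add: U_Suc chu_sum_def sum_distrib_left sum_negf)
  finally show ?thesis .
qed

lemma alt_sum_eq:
  "qpoch q q n * alt_sum q m n = (q_harmonic q m - q_harmonic q (m + n)) / qpoch q q m"
proof (induction n)
  case 0
  then show ?case
    by (simp add: alt_sum_def)
next
  case (Suc n)
  define u where "u = q ^ (m + n + 1)"
  have u: "1 - u \<noteq> 0"
    unfolding u_def by (rule one_minus_power_ne_0) simp
  have "qpoch q q (Suc n) * alt_sum q m (Suc n)
      = qpoch q q n * alt_sum q m n - u * qpoch q q n * chu_sum q m n"
    using alt_sum_Suc[of n m] by (simp add: u_def algebra_simps)
  also have "\<dots> = (q_harmonic q m - (q_harmonic q (m + n) + u / (1 - u))) / qpoch q q m"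
    using u unfolding Suc.IH chu_sum_eq u_def[symmetric] by (simp add: field_simps)
  also have "q_harmonic q (m + n) + u / (1 - u) = q_harmonic q (m + Suc n)"
    by (simp add: q_harmonic_def u_def)
  finally show ?case .
qed

end

theorem corollary6p4:
  fixes q :: "'a::field_char_0" and m n :: nat
  assumes not_root_of_unity: "\<forall>j::nat. j \<ge> 1 \<longrightarrow> q ^ j \<noteq> 1"
  shows "(\<Sum>k=1..n. (-1) ^ k * q ^ (m * k + ((k + 1) choose 2))
            / (qpoch q q k * qpoch q q (n - k) * qpoch (q ^ k) q (m + 1)))
       - (\<Sum>k=1..m. (-1) ^ k * q ^ (n * k + ((k + 1) choose 2))
            / (qpoch q q k * qpoch q q (m - k) * qpoch (q ^ k) q (n + 1)))
       = 1 / (qpoch q q m * qpoch q q n)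
           * ((\<Sum>k=1..m. q ^ k / (1 - q ^ k)) - (\<Sum>k=1..n. q ^ k / (1 - q ^ k)))"
proof -
  interpret non_root_of_unity q
    using not_root_of_unity by unfold_locales simp
  have "alt_sum q m n = (q_harmonic q m - q_harmonic q (m + n)) / (qpoch q q m * qpoch q q n)"
    using alt_sum_eq[of n m] by (simp add: field_simps)
  moreover have "alt_sum q n m = (q_harmonic q n - q_harmonic q (m + n)) / (qpoch q q m * qpoch q q n)"
    using alt_sum_eq[of m n] by (simp add: field_simps add.commute)
  ultimately have "alt_sum q m n - alt_sum q n m
      = 1 / (qpoch q q m * qpoch q q n) * (q_harmonic q m - q_harmonic q n)"
    by (simp add: diff_divide_distrib)
  then show ?thesis
    unfolding alt_sum_def qcoeff_def q_harmonic_def .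
qed

end
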